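(* Consider the setting in the context. Let $p\in[\bar h]$, $S=S_{\lfloor p/(\bar h-\delta+1)\rfloor}$ (so $i_p\in S$ and $|S|=\bar h-\delta+1$), $b\in[1,u]$, and let $\mathbf{C}$ be any codeword. Then the set of values $\{\sum_{g=0}^{u-1}\theta^{gm}c_{i_pu+g,a}: a\in[l],\ m\in[b]\}$ is determined by the data $\{\sum_{g=0}^{u-1}\theta^{gm}c_{i_pu+g,a},\ \sum_{g=0}^{u-1}\theta^{gm}c_{i_pu+g,a(i_p,a_{i_p}\oplus1)}: a\in[l],\ a|_S\in\mathcal V_0,\ m\in[b]\}$ together with $\{H_{i,i_p}(a,m)=\sum_{g=0}^{u-1}\theta^{gm}c_{i_pu+g,a}+\sum_{g=0}^{u-1}\theta^{gm}c_{i_pu+g,a(i,a_i\oplus1)}: i\in S\setminus\{i_p\},\ a\in[l],\ a|_S\in\mathcal V_0,\ m\in[b]\}$.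
   Context: $[N]=\{0,\dots,N-1\}$. Integers: $\bar n$, $u>1$, $\bar k$, $0\le v<u$, $n=\bar nu$, $k=\bar ku+v$, $r=n-k$; $\bar d=\bar k+1$; $\bar h,\delta$ with $\delta\in[1,\bar h)$, $\bar h-\delta+2=2^{\bar m}$ for some integer $\bar m\ge1$, and $(\bar h-\delta+1)\mid\bar h$. $l=2^{\bar n}$. $\mathbb{F}$ is a finite field with $|\mathbb{F}|\ge2n+1$ containing an element $\theta$ of multiplicative order $u$; $\xi$ is a primitive element and $\lambda_{i,j}=\xi^{2i+j}$ for $i\in[\bar n]$, $j\in\{0,1\}$. For $a\in[l]$ write $a=(a_{\bar n-1},\dots,a_0)$ in binary, and $a(i,j)$ is $a$ with its $i$-th bit replaced by $j$; $\oplus$ is addition mod 2. The code $\mathbf{C}$ consists of all $(c_{iu+g,a})_{i\in[\bar n],g\in[u],a\in[l]}$ over $\mathbb{F}$ with $\sum_{i=0}^{\bar n-1}\sum_{g=0}^{u-1}\theta^{gt}\lambda_{i,a_i}^tc_{iu+g,a}=0$ for all $t\in[r]$, $a\in[l]$. $\mathcal F=\{i_0,\dots,i_{\bar h-1}\}\subseteq[\bar n]$ are $\bar h$ distinct racks. $\mathcal V_0\subseteq\mathbb{F}_2^{2^{\bar m}-1}$ is the binary Hamming code of length $2^{\bar m}-1$, i.e. the kernel of a $\bar m\times(2^{\bar m}-1)$ binary matrix whose columns are all the nonzero vectors of $\mathbb{F}_2^{\bar m}$. For $q\in[\bar h/(\bar h-\delta+1))$, $S_q=\{i_{q'}: q'\in[q(\bar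 h-\delta+1),(q+1)(\bar h-\delta+1))\}$. For $J=\{j_0<\dots<j_{e-1}\}\subseteq[\bar n]$, the puncturing $a|_J=(a_{j_{e-1}},\dots,a_{j_0})\in\mathbb{F}_2^{e}$. *)

theory Defs
  imports Main
begin

text \<open>i-th binary digit of a (a = (a_{n-1},...,a_0)).\<close>
definition bitv :: "nat \<Rightarrow> nat \<Rightarrow> nat" where
  "bitv a i = a div 2 ^ i mod 2"

definition repl_bit :: "nat \<Rightarrow> nat \<Rightarrow> nat \<Rightarrow> nat" where
  "repl_bit a i j = a - bitv a i * 2 ^ i + j * 2 ^ i"

definition flip_bit :: "nat \<Rightarrow> nat \<Rightarrow> nat" where
  "flip_bit a i = repl_bit a i ((bitv a i + 1) mod 2)"

definition lam :: "'a::field \<Rightarrow> nat \<Rightarrow> nat \<Rightarrow> 'a" where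
  "lam xi i j = xi ^ (2 * i + j)"

text \<open>Membership in the code C; c (i*u+g) a is the symbol c_{iu+g,a}.\<close>
definition in_code :: "nat \<Rightarrow> nat \<Rightarrow> nat \<Rightarrow> 'a::field \<Rightarrow> 'a \<Rightarrow> (nat \<Rightarrow> nat \<Rightarrow> 'a) \<Rightarrow> bool" where
  "in_code nb u r theta xi c \<longleftrightarrow>
     (\<forall>t<r. \<forall>a<2 ^ nb.
        (\<Sum>i<nb. \<Sum>g<u. theta ^ (g * t) * (lam xi i (bitv a i)) ^ t * c (i * u + g) a) = 0)"

text \<open>Puncturing a|_J: coordinate t (0-based) is a_{j_t}, where j_0 < ... < j_{e-1}.\<close>
definition puncture :: "nat set \<Rightarrow> nat \<Rightarrow> nat \<Rightarrow> nat" where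
  "puncture J a = (\<lambda>t. bitv a (sorted_list_of_set J ! t))"

text \<open>Binary Hamming code of length 2^mb - 1: kernel of the mb x (2^mb-1) binary matrix whose
  t-th column is the binary expansion of col t; col is a bijection onto the nonzero vectors
  (numbers 1..2^mb-1). Vectors are 0/1-valued functions on {0..<2^mb-1}.\<close>
definition hamming_code :: "nat \<Rightarrow> (nat \<Rightarrow> nat) \<Rightarrow> (nat \<Rightarrow> nat) set" where
  "hamming_code mb col = {x. \<forall>s<mb. even (\<Sum>t<2 ^ mb - 1. x t * bitv (col t) s)}"

definition S_set :: "(nat \<Rightarrow> nat) \<Rightarrow> nat \<Rightarrow> nat \<Rightarrow> nat \<Rightarrow> nat set" where
  "S_set ind hb delta q = ind ` {q * (hb - delta + 1) ..< (q + 1) * (hb - delta + 1)}"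

definition nodesum :: "nat \<Rightarrow> 'a::field \<Rightarrow> (nat \<Rightarrow> nat \<Rightarrow> 'a) \<Rightarrow> nat \<Rightarrow> nat \<Rightarrow> nat \<Rightarrow> 'a" where
  "nodesum u theta c i m a = (\<Sum>g<u. theta ^ (g * m) * c (i * u + g) a)"

end

theory Submission
  imports Defs
begin

(* The binary Hamming code is perfect with covering radius 1: a word either has syndrome 0,
   or its syndrome is some column col t0 of the parity-check matrix and flipping coordinate t0
   makes it a codeword. Hence either a|_S lies in V_0, or a = a'(j, a'_j + 1) for some j in S
   with a'|_S in V_0. In the latter case the value at a is read off the data at a': directly
   if j = i_p, and otherwise as H_{j,i_p}(a', m) minus the value at a'. *)

lemma bitv_eq_of_bool_bit: "bitv a i = of_bool (bit a i)"
  unfolding bitv_def by (simp add: bit_iff_odd odd_iff_mod_2_eq_one)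

lemma flip_bit_eq_Bit_Operations_flip_bit: "Defs.flip_bit a j = Bit_Operations.flip_bit j a"
proof -
  have "Bit_Operations.flip_bit j a = a - of_bool (bit a j) * 2 ^ j + of_bool (\<not> bit a j) * 2 ^ j"
  proof (cases "bit a j")
    case True
    then have "a = Bit_Operations.set_bit j (unset_bit j a)"
      by (auto intro!: bit_eqI simp: bit_set_bit_iff bit_unset_bit_iff)
    also have "\<dots> = unset_bit j a + 2 ^ j"
      by (simp add: set_bit_eq bit_unset_bit_iff)
    finally show ?thesis using True by (simp add: flip_bit_eq_if)
  qed (simp add: flip_bit_eq_if set_bit_eq)
  then show ?thesis
    unfolding Defs.flip_bit_def repl_bit_def bitv_eq_of_bool_bit by simp
qed

lemma bitv_flip_bit: "bitv (Defs.flip_bit a j) i = (if i = j then 1 - bitv a i else bitv a i)"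
  unfolding flip_bit_eq_Bit_Operations_flip_bit bitv_eq_of_bool_bit by (auto simp: bit_flip_bit_iff)

lemma flip_bit_flip_bit [simp]: "Defs.flip_bit (Defs.flip_bit a j) j = a"
  unfolding flip_bit_eq_Bit_Operations_flip_bit by (rule bit_eqI) (auto simp: bit_flip_bit_iff)

lemma flip_bit_less_power: "a < 2 ^ n \<Longrightarrow> j < n \<Longrightarrow> Defs.flip_bit a j < 2 ^ n"
  unfolding flip_bit_eq_Bit_Operations_flip_bit
  by (metis take_bit_flip_bit_eq take_bit_nat_eq_self_iff not_le)

definition hamming_syndrome :: "nat \<Rightarrow> (nat \<Rightarrow> nat) \<Rightarrow> (nat \<Rightarrow> nat) \<Rightarrow> nat" where
  "hamming_syndrome mb col x =
     horner_sum of_bool 2 (map (\<lambda>s. odd (\<Sum>t<2 ^ mb - 1. x t * bitv (col t) s)) [0..<mb])"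

lemma bit_hamming_syndrome_iff:
  "bit (hamming_syndrome mb col x) s \<longleftrightarrow> s < mb \<and> odd (\<Sum>t<2 ^ mb - 1. x t * bitv (col t) s)"
  by (auto simp: hamming_syndrome_def bit_horner_sum_bit_iff)

lemma hamming_syndrome_less: "hamming_syndrome mb col x < 2 ^ mb"
proof -
  have "take_bit mb (hamming_syndrome mb col x) = hamming_syndrome mb col x"
    by (rule bit_eqI) (auto simp: bit_take_bit_iff bit_hamming_syndrome_iff)
  then show ?thesis by (simp add: take_bit_nat_eq_self_iff)
qed

lemma hamming_code_iff_syndrome_eq_0:
  "x \<in> hamming_code mb col \<longleftrightarrow> hamming_syndrome mb col x = 0"
  by (auto simp: hamming_code_def bit_eq_iff bit_hamming_syndrome_iff)

lemma hamming_code_cong: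
  assumes "\<And>t. t < 2 ^ mb - 1 \<Longrightarrow> x t = y t"
  shows "x \<in> hamming_code mb col \<longleftrightarrow> y \<in> hamming_code mb col"
proof -
  have "(\<Sum>t<2 ^ mb - 1. x t * bitv (col t) s) = (\<Sum>t<2 ^ mb - 1. y t * bitv (col t) s)" for s
    using assms by (intro sum.cong) auto
  then show ?thesis by (simp add: hamming_code_def)
qed

lemma even_sum_flip_coordinate_iff:
  fixes x f :: "nat \<Rightarrow> nat"
  assumes "finite T" "t0 \<in> T" "x t0 \<le> 1"
  shows "even (\<Sum>t\<in>T. (x(t0 := 1 - x t0)) t * f t)
           \<longleftrightarrow> (even (\<Sum>t\<in>T. x t * f t) \<longleftrightarrow> even (f t0))"
proof -
  define A where "A = (\<Sum>t\<in>T - {t0}. x t * f t)"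
  have "(\<Sum>t\<in>T - {t0}. (x(t0 := 1 - x t0)) t * f t) = A"
    unfolding A_def by (rule sum.cong) auto
  then have "(\<Sum>t\<in>T. (x(t0 := 1 - x t0)) t * f t) + (\<Sum>t\<in>T. x t * f t)
      = (1 - x t0) * f t0 + x t0 * f t0 + 2 * A"
    using assms by (simp add: sum.remove A_def)
  also have "\<dots> = f t0 + 2 * A"
    using \<open>x t0 \<le> 1\<close> by (simp flip: add_mult_distrib)
  finally have "even ((\<Sum>t\<in>T. (x(t0 := 1 - x t0)) t * f t) + (\<Sum>t\<in>T. x t * f t))
      \<longleftrightarrow> even (f t0)"
    by simp
  then show ?thesis by auto
qed

lemma hamming_code_covering_radius:
  assumes col: "bij_betw col {..<2 ^ mb - 1} {1..<2 ^ mb}"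
    and binary: "\<And>t. t < 2 ^ mb - 1 \<Longrightarrow> x t \<le> 1"
  shows "x \<in> hamming_code mb col \<or> (\<exists>t0<2 ^ mb - 1. x(t0 := 1 - x t0) \<in> hamming_code mb col)"
proof (cases "hamming_syndrome mb col x = 0")
  case True
  then show ?thesis by (simp add: hamming_code_iff_syndrome_eq_0)
next
  case False
  then have "hamming_syndrome mb col x \<in> col ` {..<2 ^ mb - 1}"
    using col hamming_syndrome_less[of mb col x] by (auto simp: bij_betw_def)
  then obtain t0 where t0: "t0 < 2 ^ mb - 1" and syndrome: "col t0 = hamming_syndrome mb col x"
    by auto
  have "even (\<Sum>t<2 ^ mb - 1. (x(t0 := 1 - x t0)) t * bitv (col t) s)" if "s < mb" for s
    using even_sum_flip_coordinate_iff[of "{..<2 ^ mb - 1}" t0 x "\<lambda>t. bitv (col t) s"]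
      t0 binary[OF t0] that
    by (simp add: syndrome bitv_eq_of_bool_bit bit_hamming_syndrome_iff)
  then show ?thesis
    using t0 by (auto simp: hamming_code_def)
qed

lemma puncture_le_1: "puncture S a t \<le> 1"
  by (simp add: puncture_def bitv_def)

lemma puncture_flip_bit:
  assumes "finite S" "t0 < card S" "t < card S"
  shows "puncture S (Defs.flip_bit a (sorted_list_of_set S ! t0)) t
           = ((puncture S a)(t0 := 1 - puncture S a t0)) t"
proof -
  have "sorted_list_of_set S ! t = sorted_list_of_set S ! t0 \<longleftrightarrow> t = t0"
    using assms by (simp add: nth_eq_iff_index_eq)
  then show ?thesis by (auto simp: puncture_def bitv_flip_bit)
qed

lemma puncture_near_hamming_code:
  assumes "bij_betw col {..<2 ^ mb - 1} {1..<2 ^ mb}" "finite S" "card S = 2 ^ mb - 1"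
  shows "puncture S a \<in> hamming_code mb col
           \<or> (\<exists>j\<in>S. puncture S (Defs.flip_bit a j) \<in> hamming_code mb col)"
proof -
  consider "puncture S a \<in> hamming_code mb col"
    | t0 where "t0 < 2 ^ mb - 1" "(puncture S a)(t0 := 1 - puncture S a t0) \<in> hamming_code mb col"
    using hamming_code_covering_radius[OF assms(1), of "puncture S a"] puncture_le_1 by blast
  then show ?thesis
  proof cases
    case (2 t0)
    then have "sorted_list_of_set S ! t0 \<in> S"
      using assms(2,3) by (metis length_sorted_list_of_set nth_mem set_sorted_list_of_set)
    moreover have "puncture S (Defs.flip_bit a (sorted_list_of_set S ! t0)) \<in> hamming_code mb col"
      using 2 assms(2,3) by (subst hamming_code_cong[OF puncture_flip_bit]) auto
    ultimately show ?thesis by blast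
  qed blast
qed

lemma eq_if_eq_on_hamming_code_neighbourhood:
  fixes f f' :: "nat \<Rightarrow> 'a::cancel_semigroup_add"
  assumes col: "bij_betw col {..<2 ^ mb - 1} {1..<2 ^ mb}"
    and S: "S \<subseteq> {..<nb}" "card S = 2 ^ mb - 1"
    and data: "\<forall>a<2 ^ nb. puncture S a \<in> hamming_code mb col
                 \<longrightarrow> f a = f' a \<and> f (Defs.flip_bit a i) = f' (Defs.flip_bit a i)
                   \<and> (\<forall>j \<in> S - {i}. f a + f (Defs.flip_bit a j) = f' a + f' (Defs.flip_bit a j))"
    and a: "a < 2 ^ nb"
  shows "f a = f' a"
proof -
  have "finite S" using S(1) finite_subset by blast
  from puncture_near_hamming_code[OF col this S(2), of a]
  consider "puncture S a \<in> hamming_code mb col"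
    | j where "j \<in> S" "puncture S (Defs.flip_bit a j) \<in> hamming_code mb col"
    by blast
  then show ?thesis
  proof cases
    case 1
    then show ?thesis using data a by blast
  next
    case (2 j)
    define a' where "a' = Defs.flip_bit a j"
    have "a' < 2 ^ nb"
      unfolding a'_def using flip_bit_less_power[OF a] 2(1) S(1) by blast
    then have a': "f a' = f' a'" "f (Defs.flip_bit a' i) = f' (Defs.flip_bit a' i)"
      "\<forall>j \<in> S - {i}. f a' + f (Defs.flip_bit a' j) = f' a' + f' (Defs.flip_bit a' j)"
      using data 2(2) unfolding a'_def by blast+
    have a_eq: "Defs.flip_bit a' j = a"
      unfolding a'_def by simp
    show ?thesis
    proof (cases "j = i")
      case True
      then show ?thesis using a'(2) a_eq by simp
    next
      case False
      then have "f a' + f a = f' a' + f' a"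
        using a'(3) 2(1) a_eq by auto
      then show ?thesis using a'(1) by simp
    qed
  qed
qed

lemma block_subset_lessThan:
  fixes L h p :: nat
  assumes "L dvd h" "p < h"
  shows "{p div L * L ..< (p div L + 1) * L} \<subseteq> {..<h}"
proof (cases "L = 0")
  case False
  obtain K where h: "h = K * L" using assms(1) by (metis dvd_div_mult_self)
  then have "p div L < K"
    using assms(2) False by (simp add: div_less_iff_less_mult)
  then have "(p div L + 1) * L \<le> h"
    unfolding h by (intro mult_le_mono1) simp
  then show ?thesis by auto
qed simp

theorem lemma5:
  fixes theta xi :: "'a::{field,finite}"
    and nb u kb v n k r hb delta mb p b :: nat
    and ind :: "nat \<Rightarrow> nat"
    and col :: "nat \<Rightarrow> nat"
    and c c' :: "nat \<Rightarrow> nat \<Rightarrow> 'a"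
  assumes "u > 1" and "v < u" and "n = nb * u" and "k = kb * u + v" and "r = n - k"
    and "1 \<le> delta" and "delta < hb" and "hb - delta + 2 = 2 ^ mb" and "mb \<ge> 1"
    and "(hb - delta + 1) dvd hb"
    and "card (UNIV :: 'a set) \<ge> 2 * n + 1"
    and "theta ^ u = 1" and "\<forall>j. 0 < j \<and> j < u \<longrightarrow> theta ^ j \<noteq> 1"
    and "\<forall>x::'a. x \<noteq> 0 \<longrightarrow> (\<exists>j. x = xi ^ j)"
    and "inj_on ind {..<hb}" and "ind ` {..<hb} \<subseteq> {..<nb}"
    and "bij_betw col {..<2 ^ mb - 1} {1..<2 ^ mb}"
    and "p < hb"
    and "1 \<le> b" and "b \<le> u"
    and "in_code nb u r theta xi c" and "in_code nb u r theta xi c'"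
    and "\<forall>a<2 ^ nb. puncture (S_set ind hb delta (p div (hb - delta + 1))) a \<in> hamming_code mb col
           \<longrightarrow> (\<forall>m<b.
                 nodesum u theta c (ind p) m a = nodesum u theta c' (ind p) m a
               \<and> nodesum u theta c (ind p) m (flip_bit a (ind p))
                   = nodesum u theta c' (ind p) m (flip_bit a (ind p))
               \<and> (\<forall>i \<in> S_set ind hb delta (p div (hb - delta + 1)) - {ind p}.
                    nodesum u theta c (ind p) m a + nodesum u theta c (ind p) m (flip_bit a i)
                  = nodesum u theta c' (ind p) m a + nodesum u theta c' (ind p) m (flip_bit a i)))"
  shows "\<forall>a<2 ^ nb. \<forall>m<b. nodesum u theta c (ind p) m a = nodesum u theta c' (ind p) m a"
proof (intro allI impI)
  fix a m :: nat
  assume a: "a < 2 ^ nb" and m: "m < b"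
  define L where "L = hb - delta + 1"
  define S where "S = S_set ind hb delta (p div L)"
  have block: "{p div L * L ..< (p div L + 1) * L} \<subseteq> {..<hb}"
    using block_subset_lessThan assms(10,18) unfolding L_def by blast
  have S_eq: "S = ind ` {p div L * L ..< (p div L + 1) * L}"
    unfolding S_def S_set_def L_def ..
  have "L = 2 ^ mb - 1"
    using assms(8) unfolding L_def by linarith
  then have "card S = 2 ^ mb - 1"
    using card_image[OF inj_on_subset[OF assms(15) block]] unfolding S_eq by simp
  moreover have "S \<subseteq> {..<nb}"
    using block assms(16) unfolding S_eq by blast
  ultimately show "nodesum u theta c (ind p) m a = nodesum u theta c' (ind p) m a"
    using eq_if_eq_on_hamming_code_neighbourhood[OF assms(17), where i = "ind p"
        and f = "\<lambda>a. nodesum u theta c (ind p) m a" and f' = "\<lambda>a. nodesum u theta c' (ind p) m a"]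
      assms(23) a m
    unfolding S_def L_def by blast
qed

end
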